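(* Consider a game in which Constructor and Blocker alternately claim unclaimed edges of $K_n$ (with Constructor possibly subject to restrictions on which edges she may claim). Assume that Blocker always answers each move of Constructor by claiming an unclaimed edge with both endpoints in the connected component of Constructor's graph containing the edge Constructor just claimed, whenever such an unclaimed edge exists. If at the end of the game some connected component $C$ of Constructor's graph has $r$ vertices, then at least $$\frac{\binom{r}{2}-\lfloor r/2\rfloor}{2}$$ of the edges of $K_n$ between vertices of $C$ are not claimed by Constructor.
   Context: Constructor's graph is the graph on $V(K_n)$ whose edges are those claimed by Constructor. *)

theory Defs
  imports Complex_Main
begin

definition Kn_edges :: "nat \<Rightarrow> nat set set" where
  "Kn_edges n = {e. e \<subseteq> {..<n} \<and> card e = 2}"

definition component :: "nat \<Rightarrow> nat set set \<Rightarrow> nat \<Rightarrow> nat set" where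
  "component n E v = {w \<in> {..<n}. (\<lambda>x y. {x, y} \<in> E)\<^sup>*\<^sup>* v w}"

definition is_component :: "nat \<Rightarrow> nat set set \<Rightarrow> nat set \<Rightarrow> bool" where
  "is_component n E C \<longleftrightarrow> (\<exists>v<n. C = component n E v)"

text \<open>A play is a list of rounds: Constructor claims an edge, then Blocker claims
  an edge (Some e) or makes no move (None).\<close>
type_synonym round = "nat set \<times> nat set option"

definition cons_edges :: "round list \<Rightarrow> nat set set" where
  "cons_edges rs = fst ` set rs"

definition blk_edges :: "round list \<Rightarrow> nat set set" where
  "blk_edges rs = (\<Union>r \<in> set rs. set_option (snd r))"

definition claimed :: "round list \<Rightarrow> nat set set" where
  "claimed rs = cons_edges rs \<union> blk_edges rs"

definition legal_play :: "nat \<Rightarrow> round list \<Rightarrow> bool" where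
  "legal_play n rs \<longleftrightarrow> (\<forall>i<length rs.
     fst (rs ! i) \<in> Kn_edges n \<and> fst (rs ! i) \<notin> claimed (take i rs) \<and>
     (\<forall>e. snd (rs ! i) = Some e \<longrightarrow>
        e \<in> Kn_edges n \<and> e \<notin> claimed (take i rs) \<and> e \<noteq> fst (rs ! i)))"

definition blocker_follows_rule :: "nat \<Rightarrow> round list \<Rightarrow> bool" where
  "blocker_follows_rule n rs \<longleftrightarrow> (\<forall>i<length rs. \<forall>u \<in> fst (rs ! i).
     let K = component n (cons_edges (take i rs) \<union> {fst (rs ! i)}) u in
     (\<exists>e \<in> Kn_edges n. e \<subseteq> K \<and> e \<notin> claimed (take i rs) \<and> e \<noteq> fst (rs ! i)) \<longrightarrow>
     (\<exists>e. snd (rs ! i) = Some e \<and> e \<subseteq> K))"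

end

theory Submission imports Defs begin

text \<open>Call the surplus of a vertex set K the number of Constructor's edges inside K minus
  the number of Blocker's edges inside K. The invariant is that every component K of
  Constructor's graph has surplus at most |K| div 2. A move of Constructor raises the surplus
  only of the component containing her new edge, and by at most one: if the edge merges
  components A and A', then |A| div 2 + |A'| div 2 \<le> |A \<union> A'| div 2. Blocker then claims an
  edge inside that component, restoring the invariant, unless all its edges are already
  claimed; but then the surplus is congruent to |K| choose 2, hence to |K| div 2, modulo 2, so
  the excess of one cannot occur. At the end, if Constructor has a and Blocker b edges inside
  C, then a - b \<le> r div 2 and a + b \<le> r choose 2, so (r choose 2) - a \<ge> ((r choose 2) - r div 2) / 2.\<close>

definition reach :: "nat set set \<Rightarrow> nat \<Rightarrow> nat \<Rightarrow> bool" where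
  "reach E = (\<lambda>x y. {x, y} \<in> E)\<^sup>*\<^sup>*"

lemma component_reach: "component n E v = {w \<in> {..<n}. reach E v w}"
  unfolding component_def reach_def ..

lemma reach_refl [simp]: "reach E a a"
  unfolding reach_def by simp

lemma reach_edge: "{a, b} \<in> E \<Longrightarrow> reach E a b"
  unfolding reach_def by (rule r_into_rtranclp)

lemma reach_trans: "reach E a b \<Longrightarrow> reach E b c \<Longrightarrow> reach E a c"
  unfolding reach_def by (rule rtranclp_trans)

lemma reach_sym: "reach E a b \<Longrightarrow> reach E b a"
proof -
  have "symp (\<lambda>x y. {x, y} \<in> E)"
    by (simp add: symp_def insert_commute)
  then show "reach E a b \<Longrightarrow> reach E b a"
    unfolding reach_def by (rule sympD[OF symp_rtranclp])
qed

lemma reach_start_cong: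
  assumes "reach E a b"
  shows "reach E a w \<longleftrightarrow> reach E b w"
  using reach_trans[OF assms, of w] reach_trans[OF reach_sym[OF assms], of w] by blast

lemma reach_mono: "E \<subseteq> F \<Longrightarrow> reach E a b \<Longrightarrow> reach F a b"
  unfolding reach_def by (rule mono_rtranclp[rule_format]) auto

lemma reach_insert:
  "reach (insert {x, y} E) a b \<longleftrightarrow>
   reach E a b \<or> (reach E a x \<and> reach E y b) \<or> (reach E a y \<and> reach E x b)"
proof
  assume "reach (insert {x, y} E) a b"
  then show "reach E a b \<or> (reach E a x \<and> reach E y b) \<or> (reach E a y \<and> reach E x b)"
    unfolding reach_def[of "insert {x, y} E"]
  proof (induction rule: rtranclp_induct)
    case (step b c)
    then consider "{b, c} \<in> E" | "b = x" "c = y" | "b = y" "c = x"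
      by (auto simp: doubleton_eq_iff)
    then show ?case
      using step.IH by cases (meson reach_edge reach_trans reach_refl)+
  qed simp
next
  have "reach (insert {x, y} E) x y" "reach (insert {x, y} E) y x"
    by (auto intro: reach_edge simp: insert_commute)
  moreover assume "reach E a b \<or> (reach E a x \<and> reach E y b) \<or> (reach E a y \<and> reach E x b)"
  ultimately show "reach (insert {x, y} E) a b"
    using reach_mono[of E "insert {x, y} E"] by (meson reach_trans subset_insertI)
qed

lemma component_subset: "component n E v \<subseteq> {..<n}"
  unfolding component_def by auto

lemma finite_component [simp]: "finite (component n E v)"
  by (rule finite_subset[OF component_subset]) simp

lemma component_eq:
  assumes "reach E x y"
  shows "component n E x = component n E y"
  using reach_start_cong[OF assms] by (simp add: component_reach)

lemma mem_component_iff: "w \<in> component n E v \<longleftrightarrow> w < n \<and> reach E v w"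
  unfolding component_reach by auto

lemma is_component_eq_component:
  assumes "is_component n E K" "u \<in> K"
  shows "K = component n E u"
proof -
  obtain v where K: "K = component n E v"
    using assms(1) unfolding is_component_def by blast
  then have "reach E v u"
    using assms(2) by (simp add: mem_component_iff)
  then show ?thesis
    unfolding K by (rule component_eq)
qed

lemma components_disjoint:
  assumes "\<not> reach E x y"
  shows "component n E x \<inter> component n E y = {}"
  using assms reach_trans reach_sym unfolding component_reach by blast

lemma component_insert_edge:
  assumes "x < n" "y < n"
  shows "component n (insert {x, y} E) v =
    (if reach E v x \<or> reach E v y then component n E x \<union> component n E y else component n E v)"
proof (cases "reach E v x \<or> reach E v y")
  case True
  have "reach (insert {x, y} E) v w \<longleftrightarrow> reach E x w \<or> reach E y w" for w
    using True
  proof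
    assume "reach E v x"
    show ?thesis
      unfolding reach_insert reach_start_cong[OF \<open>reach E v x\<close>] by auto
  next
    assume "reach E v y"
    show ?thesis
      unfolding reach_insert reach_start_cong[OF \<open>reach E v y\<close>] by auto
  qed
  then show ?thesis
    using True by (auto simp: component_reach)
next
  case False
  then have "reach (insert {x, y} E) v w \<longleftrightarrow> reach E v w" for w
    unfolding reach_insert by blast
  then show ?thesis
    using False by (auto simp: component_reach)
qed

lemma finite_Kn_edges: "finite (Kn_edges n)"
proof -
  have "Kn_edges n \<subseteq> Pow {..<n}"
    unfolding Kn_edges_def by auto
  then show ?thesis
    by (rule finite_subset) simp
qed

lemma card_Kn_edges_within:
  assumes "K \<subseteq> {..<n}"
  shows "card {e \<in> Kn_edges n. e \<subseteq> K} = card K choose 2"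
proof -
  have "{e \<in> Kn_edges n. e \<subseteq> K} = {e. e \<subseteq> K \<and> card e = 2}"
    using assms unfolding Kn_edges_def by auto
  moreover have "finite K"
    using assms finite_subset by blast
  ultimately show ?thesis
    by (simp add: n_subsets)
qed

lemma Kn_edgeE:
  assumes "e \<in> Kn_edges n"
  obtains x y where "e = {x, y}" "x \<noteq> y" "x < n" "y < n"
proof -
  from assms have "card e = 2" "e \<subseteq> {..<n}"
    unfolding Kn_edges_def by auto
  then show ?thesis
    using that by (auto simp: card_2_iff)
qed

lemma Kn_edge_nonempty: "e \<in> Kn_edges n \<Longrightarrow> e \<noteq> {}"
  unfolding Kn_edges_def by auto

lemma edge_subset_component:
  assumes "e \<in> E" "E \<subseteq> Kn_edges n" "p \<in> e" "p \<in> component n E v"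
  shows "e \<subseteq> component n E v"
proof -
  obtain x y where e: "e = {x, y}" "x < n" "y < n"
    using assms(1,2) by (blast elim: Kn_edgeE)
  then have "reach E x y" "reach E y x"
    using assms(1) by (auto intro: reach_edge simp: insert_commute)
  then show ?thesis
    using assms(3,4) e by (auto simp: mem_component_iff intro: reach_trans)
qed

lemma even_choose_two_add_half: "even ((k choose 2) + k div 2)"
proof (cases "even k")
  case True
  then obtain m where "k = 2 * m" by blast
  then have "(k choose 2) + k div 2 = 2 * (m * m)"
    by (cases m) (auto simp: choose_two algebra_simps)
  then show ?thesis by simp
next
  case False
  then obtain m where "k = 2 * m + 1" using oddE by blast
  then have "(k choose 2) + k div 2 = 2 * (m * m + m)"
    by (simp add: choose_two algebra_simps)
  then show ?thesis by simp
qed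

definition edges_in :: "nat set set \<Rightarrow> nat set \<Rightarrow> nat set set" where
  "edges_in E K = {e \<in> E. e \<subseteq> K}"

definition surplus :: "nat set set \<Rightarrow> nat set set \<Rightarrow> nat set \<Rightarrow> int" where
  "surplus E B K = int (card (edges_in E K)) - int (card (edges_in B K))"

definition balanced :: "nat \<Rightarrow> nat set set \<Rightarrow> nat set set \<Rightarrow> bool" where
  "balanced n E B \<longleftrightarrow> (\<forall>K. is_component n E K \<longrightarrow> surplus E B K \<le> int (card K div 2))"

lemma finite_edges_in: "E \<subseteq> Kn_edges n \<Longrightarrow> finite (edges_in E K)"
  unfolding edges_in_def by (rule finite_subset[OF _ finite_Kn_edges]) auto

lemma surplus_union_components:
  assumes E: "E \<subseteq> Kn_edges n" and B: "B \<subseteq> Kn_edges n"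
    and A: "A = component n E x" and A': "A' = component n E y" and disj: "A \<inter> A' = {}"
  shows "surplus E B (A \<union> A') \<le> surplus E B A + surplus E B A'"
proof -
  have no_straddle: "edges_in F A \<inter> edges_in F A' = {}" if "F \<subseteq> Kn_edges n" for F
  proof -
    have "e = {}" if "e \<subseteq> A" "e \<subseteq> A'" for e
      using that disj by blast
    moreover have "e \<noteq> {}" if "e \<in> F" for e
      using that \<open>F \<subseteq> Kn_edges n\<close> Kn_edge_nonempty by blast
    ultimately show ?thesis
      unfolding edges_in_def by blast
  qed
  have "e \<subseteq> A \<or> e \<subseteq> A'" if e: "e \<in> E" "e \<subseteq> A \<union> A'" for e
  proof -
    obtain p where "p \<in> e"
      using e(1) E Kn_edge_nonempty by blast
    then show ?thesis
      using e edge_subset_component[OF e(1) E] unfolding A A' by blast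
  qed
  then have "edges_in E (A \<union> A') = edges_in E A \<union> edges_in E A'"
    unfolding edges_in_def by blast
  then have "card (edges_in E (A \<union> A')) = card (edges_in E A) + card (edges_in E A')"
    using no_straddle[OF E] finite_edges_in[OF E] by (simp add: card_Un_disjoint)
  moreover have "card (edges_in B A) + card (edges_in B A') \<le> card (edges_in B (A \<union> A'))"
  proof -
    have "card (edges_in B A) + card (edges_in B A') = card (edges_in B A \<union> edges_in B A')"
      using no_straddle[OF B] finite_edges_in[OF B] by (simp add: card_Un_disjoint)
    also have "\<dots> \<le> card (edges_in B (A \<union> A'))"
      by (rule card_mono[OF finite_edges_in[OF B]]) (auto simp: edges_in_def)
    finally show ?thesis .
  qed
  ultimately show ?thesis
    unfolding surplus_def by linarith
qed

lemma surplus_insert: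
  assumes "E \<subseteq> Kn_edges n" "c \<notin> E"
  shows "surplus (insert c E) B K = surplus E B K + (if c \<subseteq> K then 1 else 0)"
proof (cases "c \<subseteq> K")
  case True
  then have "edges_in (insert c E) K = insert c (edges_in E K)"
    unfolding edges_in_def by auto
  then show ?thesis
    using True assms finite_edges_in[OF assms(1)] unfolding surplus_def by (simp add: edges_in_def)
next
  case False
  then have "edges_in (insert c E) K = edges_in E K"
    unfolding edges_in_def by auto
  then show ?thesis
    using False unfolding surplus_def by simp
qed

lemma surplus_extend_blocker:
  assumes "B \<subseteq> B'" "B' \<subseteq> Kn_edges n"
  shows "surplus E B' K = surplus E B K - int (card (edges_in (B' - B) K))"
proof -
  have "edges_in B' K = edges_in B K \<union> edges_in (B' - B) K"
    "edges_in B K \<inter> edges_in (B' - B) K = {}"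
    using assms(1) unfolding edges_in_def by auto
  moreover have "finite (edges_in B K)" "finite (edges_in (B' - B) K)"
    using assms finite_edges_in by (metis Diff_subset order_trans)+
  ultimately show ?thesis
    unfolding surplus_def by (simp add: card_Un_disjoint)
qed

lemma card_edges_in_disjoint_le:
  assumes E: "E \<subseteq> Kn_edges n" and B: "B \<subseteq> Kn_edges n" and disj: "E \<inter> B = {}"
    and K: "K \<subseteq> {..<n}"
  shows "card (edges_in E K) + card (edges_in B K) \<le> card K choose 2"
proof -
  have "card (edges_in E K) + card (edges_in B K) = card (edges_in E K \<union> edges_in B K)"
    using disj finite_edges_in[OF E] finite_edges_in[OF B]
    by (simp add: card_Un_disjoint edges_in_def disjoint_iff)
  also have "\<dots> \<le> card {e \<in> Kn_edges n. e \<subseteq> K}"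
    by (rule card_mono) (use E B finite_Kn_edges in \<open>auto simp: edges_in_def\<close>)
  finally show ?thesis
    unfolding card_Kn_edges_within[OF K] .
qed

lemma card_Kn_edges_within_not_in:
  assumes E: "E \<subseteq> Kn_edges n" and K: "K \<subseteq> {..<n}"
  shows "card {e \<in> Kn_edges n. e \<subseteq> K \<and> e \<notin> E} = (card K choose 2) - card (edges_in E K)"
proof -
  have "{e \<in> Kn_edges n. e \<subseteq> K \<and> e \<notin> E} = {e \<in> Kn_edges n. e \<subseteq> K} - edges_in E K"
    "edges_in E K \<subseteq> {e \<in> Kn_edges n. e \<subseteq> K}"
    using E unfolding edges_in_def by auto
  then show ?thesis
    using card_Diff_subset[OF finite_edges_in[OF E]] card_Kn_edges_within[OF K] by simp
qed

lemma even_surplus_if_saturated: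
  assumes E: "E \<subseteq> Kn_edges n" and B: "B \<subseteq> Kn_edges n" and disj: "E \<inter> B = {}"
    and K: "K \<subseteq> {..<n}" and saturated: "{e \<in> Kn_edges n. e \<subseteq> K} \<subseteq> E \<union> B"
  shows "even (surplus E B K + int (card K div 2))"
proof -
  have "{e \<in> Kn_edges n. e \<subseteq> K} = edges_in E K \<union> edges_in B K"
    using E B saturated unfolding edges_in_def by auto
  moreover have "edges_in E K \<inter> edges_in B K = {}"
    using disj unfolding edges_in_def by auto
  ultimately have "card (edges_in E K) + card (edges_in B K) = card K choose 2"
    using card_Kn_edges_within[OF K] finite_edges_in[OF E] finite_edges_in[OF B]
    by (simp add: card_Un_disjoint)
  then have "surplus E B K + int (card K div 2)
      = int ((card K choose 2) + card K div 2) - 2 * int (card (edges_in B K))"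
    unfolding surplus_def by linarith
  then show ?thesis
    using even_choose_two_add_half[of "card K"] by simp
qed

lemma surplus_le_component_insert_edge:
  assumes E: "E \<subseteq> Kn_edges n" and B: "B \<subseteq> Kn_edges n" and bal: "balanced n E B"
    and xy: "x < n" "y < n" and K: "is_component n (insert {x, y} E) K"
  shows "surplus E B K \<le> int (card K div 2)"
proof -
  have old: "surplus E B (component n E w) \<le> int (card (component n E w) div 2)" if "w < n" for w
    using bal that unfolding balanced_def is_component_def by blast
  obtain v where "v < n" and Kv: "K = component n (insert {x, y} E) v"
    using K unfolding is_component_def by blast
  show ?thesis
  proof (cases "reach E v x \<or> reach E v y")
    case False
    then show ?thesis
      using old[OF \<open>v < n\<close>] unfolding Kv component_insert_edge[OF xy] by simp
  next
    case True
    define A A' where "A = component n E x" and "A' = component n E y"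
    have KA: "K = A \<union> A'"
      using True unfolding Kv component_insert_edge[OF xy] A_def A'_def by simp
    show ?thesis
    proof (cases "reach E x y")
      case True
      then show ?thesis
        using old[OF xy(1)] component_eq[OF True] unfolding KA A_def A'_def by simp
    next
      case False
      then have disj: "A \<inter> A' = {}"
        unfolding A_def A'_def by (rule components_disjoint)
      then have "card K = card A + card A'"
        unfolding KA A_def A'_def by (simp add: card_Un_disjoint)
      then have "card A div 2 + card A' div 2 \<le> card K div 2"
        by linarith
      moreover have "surplus E B K \<le> surplus E B A + surplus E B A'"
        unfolding KA using surplus_union_components[OF E B A_def A'_def disj] .
      ultimately show ?thesis
        using old[OF xy(1)] old[OF xy(2)] unfolding A_def A'_def by linarith
    qed
  qed
qed

lemma balanced_round:
  assumes E: "E \<subseteq> Kn_edges n" and B: "B \<subseteq> Kn_edges n" and disj: "E \<inter> B = {}"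
    and c: "c \<in> Kn_edges n" "c \<notin> E \<union> B" and B': "B \<subseteq> B'" "B' \<subseteq> Kn_edges n"
    and bal: "balanced n E B"
    and blocker: "\<And>K. is_component n (insert c E) K \<Longrightarrow> c \<subseteq> K \<Longrightarrow>
      (\<exists>e \<in> Kn_edges n. e \<subseteq> K \<and> e \<notin> insert c E \<union> B) \<Longrightarrow> edges_in (B' - B) K \<noteq> {}"
  shows "balanced n (insert c E) B'"
  unfolding balanced_def
proof (intro allI impI)
  fix K assume K: "is_component n (insert c E) K"
  obtain x y where xy: "c = {x, y}" "x < n" "y < n"
    using c(1) by (blast elim: Kn_edgeE)
  have "surplus E B K \<le> int (card K div 2)"
    using surplus_le_component_insert_edge[OF E B bal xy(2,3)] K unfolding xy(1) by blast
  then have pre: "surplus (insert c E) B K \<le> int (card K div 2) + (if c \<subseteq> K then 1 else 0)"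
    using surplus_insert[OF E] c(2) by simp
  have drop: "surplus (insert c E) B' K = surplus (insert c E) B K - int (card (edges_in (B' - B) K))"
    by (rule surplus_extend_blocker[OF B'])
  consider "\<not> c \<subseteq> K" | "edges_in (B' - B) K \<noteq> {}"
    | "c \<subseteq> K" "{e \<in> Kn_edges n. e \<subseteq> K} \<subseteq> insert c E \<union> B"
    using blocker[OF K] by blast
  then show "surplus (insert c E) B' K \<le> int (card K div 2)"
  proof cases
    case 2
    then have "card (edges_in (B' - B) K) > 0"
      using finite_edges_in[of "B' - B" n K] B' by (auto simp: card_gt_0_iff)
    then show ?thesis
      using pre drop by (simp split: if_splits)
  next
    case 3
    have "K \<subseteq> {..<n}"
      using K component_subset unfolding is_component_def by blast
    then have "even (surplus (insert c E) B K + int (card K div 2))"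
      using even_surplus_if_saturated[of "insert c E" n B K] 3 E B c disj by blast
    with pre 3(1) have "surplus (insert c E) B K \<le> int (card K div 2)"
      by presburger
    then show ?thesis
      using drop by linarith
  qed (use pre drop in simp)
qed

lemma cons_edges_snoc: "cons_edges (rs @ [(c, s)]) = insert c (cons_edges rs)"
  unfolding cons_edges_def by auto

lemma blk_edges_snoc: "blk_edges (rs @ [(c, s)]) = blk_edges rs \<union> set_option s"
  unfolding blk_edges_def by auto

lemma legal_play_snoc:
  "legal_play n (rs @ [(c, s)]) \<longleftrightarrow> legal_play n rs \<and> c \<in> Kn_edges n \<and> c \<notin> claimed rs \<and>
     (\<forall>e. s = Some e \<longrightarrow> e \<in> Kn_edges n \<and> e \<notin> claimed rs \<and> e \<noteq> c)"
  unfolding legal_play_def by (auto simp: All_less_Suc nth_append)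

lemma blocker_follows_rule_snoc:
  "blocker_follows_rule n (rs @ [(c, s)]) \<longleftrightarrow> blocker_follows_rule n rs \<and>
     (\<forall>u \<in> c. let K = component n (insert c (cons_edges rs)) u in
       (\<exists>e \<in> Kn_edges n. e \<subseteq> K \<and> e \<notin> claimed rs \<and> e \<noteq> c) \<longrightarrow> (\<exists>e. s = Some e \<and> e \<subseteq> K))"
  unfolding blocker_follows_rule_def by (auto simp: All_less_Suc nth_append)

lemma legal_play_edges:
  assumes "legal_play n rs"
  shows "cons_edges rs \<subseteq> Kn_edges n \<and> blk_edges rs \<subseteq> Kn_edges n \<and> cons_edges rs \<inter> blk_edges rs = {}"
  using assms
proof (induction rs rule: rev_induct)
  case Nil
  then show ?case
    by (simp add: cons_edges_def blk_edges_def)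
next
  case (snoc r rs)
  then show ?case
    by (cases r) (auto simp: legal_play_snoc cons_edges_snoc blk_edges_snoc claimed_def)
qed

lemma balanced_snoc:
  assumes "legal_play n (rs @ [(c, s)])" "blocker_follows_rule n (rs @ [(c, s)])"
    and "balanced n (cons_edges rs) (blk_edges rs)"
  shows "balanced n (cons_edges (rs @ [(c, s)])) (blk_edges (rs @ [(c, s)]))"
proof -
  define E B where "E = cons_edges rs" and "B = blk_edges rs"
  have claimed: "claimed rs = E \<union> B"
    unfolding claimed_def E_def B_def ..
  have legal: "legal_play n rs" "c \<in> Kn_edges n" "c \<notin> E \<union> B"
    "\<And>e. s = Some e \<Longrightarrow> e \<in> Kn_edges n \<and> e \<notin> E \<union> B"
    using assms(1) unfolding legal_play_snoc claimed by blast+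
  have rule: "\<And>u. u \<in> c \<Longrightarrow> \<exists>e \<in> Kn_edges n. e \<subseteq> component n (insert c E) u \<and> e \<notin> insert c E \<union> B \<Longrightarrow>
      \<exists>e. s = Some e \<and> e \<subseteq> component n (insert c E) u"
    using assms(2) unfolding blocker_follows_rule_snoc claimed E_def[symmetric] Let_def
    by blast
  have edges: "E \<subseteq> Kn_edges n" "B \<subseteq> Kn_edges n" "E \<inter> B = {}"
    using legal_play_edges[OF legal(1)] unfolding E_def B_def by blast+
  have "balanced n (insert c E) (B \<union> set_option s)"
  proof (rule balanced_round[OF edges legal(2,3)])
    show "B \<union> set_option s \<subseteq> Kn_edges n"
      using edges legal(4) by (cases s) auto
    show "balanced n E B"
      using assms(3) unfolding E_def B_def .
  next
    fix K assume K: "is_component n (insert c E) K" "c \<subseteq> K"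
      and unclaimed: "\<exists>e \<in> Kn_edges n. e \<subseteq> K \<and> e \<notin> insert c E \<union> B"
    obtain u where "u \<in> c"
      using legal(2) Kn_edge_nonempty by blast
    then have "K = component n (insert c E) u"
      using is_component_eq_component[OF K(1)] K(2) by blast
    then obtain e where "s = Some e" "e \<subseteq> K"
      using rule[OF \<open>u \<in> c\<close>] unclaimed by blast
    then show "edges_in (B \<union> set_option s - B) K \<noteq> {}"
      using legal(4) unfolding edges_in_def by auto
  qed simp
  then show ?thesis
    unfolding cons_edges_snoc blk_edges_snoc E_def B_def .
qed

lemma balanced_play:
  assumes "legal_play n rs" "blocker_follows_rule n rs"
  shows "balanced n (cons_edges rs) (blk_edges rs)"
  using assms
proof (induction rs rule: rev_induct)
  case Nil
  then show ?case
    by (simp add: balanced_def surplus_def edges_in_def cons_edges_def blk_edges_def)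
next
  case (snoc r rs)
  obtain c s where r: "r = (c, s)"
    by fastforce
  have "balanced n (cons_edges rs) (blk_edges rs)"
    using snoc unfolding r legal_play_snoc blocker_follows_rule_snoc by blast
  then show ?case
    using balanced_snoc snoc.prems unfolding r by blast
qed

theorem lemma2p4:
  fixes n r :: nat and rs :: "round list" and C :: "nat set"
  assumes "legal_play n rs"
    and "blocker_follows_rule n rs"
    and "is_component n (cons_edges rs) C"
    and "card C = r"
  shows "real (card {e \<in> Kn_edges n. e \<subseteq> C \<and> e \<notin> cons_edges rs})
           \<ge> (real (r choose 2) - real (r div 2)) / 2"
proof -
  define E B where "E = cons_edges rs" and "B = blk_edges rs"
  have edges: "E \<subseteq> Kn_edges n" "B \<subseteq> Kn_edges n" "E \<inter> B = {}"
    using legal_play_edges[OF assms(1)] unfolding E_def B_def by blast+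
  have C: "C \<subseteq> {..<n}"
    using assms(3) component_subset unfolding is_component_def by blast
  have "surplus E B C \<le> int (r div 2)"
    using balanced_play[OF assms(1,2)] assms(3,4) unfolding balanced_def E_def B_def by blast
  moreover have "card (edges_in E C) + card (edges_in B C) \<le> r choose 2"
    using card_edges_in_disjoint_le[OF edges C] assms(4) by simp
  moreover have "card {e \<in> Kn_edges n. e \<subseteq> C \<and> e \<notin> cons_edges rs} = (r choose 2) - card (edges_in E C)"
    using card_Kn_edges_within_not_in[OF edges(1) C] assms(4) unfolding E_def by simp
  ultimately show ?thesis
    unfolding surplus_def by (simp add: of_nat_diff)
qed

end
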